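(* Let $(G,x,y)$ be an $n$-isobicyclic triple, written as a semidirect product $G=T\rtimes S$, $x=x_Sx_T$, $y=y_Sy_T$ of the standard $t$-isobicyclic triple $(T,x_T,y_T)$ by an $s$-isobicyclic triple $(S,x_S,y_S)$ via a diagonal action with eigenvalue $\lambda$ as in Theorem 4.1, where the decomposition is canonical, i.e. $T\cap Z(G)=1$. Then the order of $xy$ in $G$ equals the order of $x_Sy_S$ in $S$.
   Context: $(G,x,y)$ is $n$-isobicyclic if $\langle x\rangle,\langle y\rangle$ are cyclic of order $n$, $G=\langle x\rangle\langle y\rangle$, $\langle x\rangle\cap\langle y\rangle=1$, and some automorphism transposes $x,y$. The standard $t$-triple is $(C_t\times C_t,x_T,y_T)$ with $x_T,y_T$ a basis. The semidirect product with eigenvalue $\lambda\in\mathbb Z_t^*$ ($\gcd(s,t)=1$): $x_S$ acts by conjugation fixing $x_T$ and sending $y_T\mapsto y_T^\lambda$, $y_S$ sends $x_T\mapsto x_T^\lambda$ and fixes $y_T$. Every $n$-isobicyclic triple has such a decomposition with $S$ a cartesian (direct) product of prime-power isobicyclic triples, and there is a unique one with $t$ minimal, characterised by $T\cap Z(G)=1$ ($Z(G)$ the centre). *)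

theory Defs
  imports "HOL-Algebra.Algebra"
begin

definition center :: "('a, 'b) monoid_scheme \<Rightarrow> 'a set" where
  "center G = {z \<in> carrier G. \<forall>g \<in> carrier G. z \<otimes>\<^bsub>G\<^esub> g = g \<otimes>\<^bsub>G\<^esub> z}"

definition isobicyclic :: "('a, 'b) monoid_scheme \<Rightarrow> 'a \<Rightarrow> 'a \<Rightarrow> nat \<Rightarrow> bool" where
  "isobicyclic G x y n \<longleftrightarrow>
     group G \<and> x \<in> carrier G \<and> y \<in> carrier G \<and> 0 < n \<and>
     group.ord G x = n \<and> group.ord G y = n \<and>
     carrier G = generate G {x} <#>\<^bsub>G\<^esub> generate G {y} \<and>
     generate G {x} \<inter> generate G {y} = {\<one>\<^bsub>G\<^esub>} \<and>
     (\<exists>\<phi>. \<phi> \<in> iso G G \<and> \<phi> x = y \<and> \<phi> y = x)"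

definition standard_triple :: "('a, 'b) monoid_scheme \<Rightarrow> 'a \<Rightarrow> 'a \<Rightarrow> nat \<Rightarrow> bool" where
  "standard_triple T xT yT t \<longleftrightarrow> 0 < t \<and>
     (\<exists>\<phi>. \<phi> \<in> iso (integer_mod_group t \<times>\<times> integer_mod_group t) T \<and>
          \<phi> (1 mod int t, 0) = xT \<and> \<phi> (0, 1 mod int t) = yT)"

end

theory Submission
  imports Defs
begin

(* Write g = x_S y_S \<in> S and \<sigma> = x_T y_T^\<lambda> \<in> T.  Moving x_T past y_S with the
   diagonal action gives x y = \<sigma> g, and conjugation by g raises every
   generator of the abelian group T to the power \<lambda>.  Hence
   (\<sigma> g)^k = \<sigma>^(1 + \<lambda> + ... + \<lambda>^(k-1)) g^k.
   If (\<sigma> g)^k = 1 then g^k \<in> T \<inter> S = 1.  Conversely, if g^k = 1 then \<lambda>^k acts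
   trivially on x_T and y_T, which forces z = \<sigma>^(1 + ... + \<lambda>^(k-1)) to be
   fixed by x_S and y_S; as T is abelian and G = T S, z is central, so z = 1
   by the canonicity condition T \<inter> Z(G) = 1.  Thus x y and g have the same
   order. *)

text \<open>The geometric sum \<open>1 + l + \<dots> + l^(k-1)\<close>, the exponent of the
  \<open>T\<close>-component of \<open>(\<sigma> g)^k\<close>.\<close>
definition geom :: "nat \<Rightarrow> nat \<Rightarrow> nat" where
  "geom l k = (\<Sum>i<k. l ^ i)"

lemma geom_Suc: "geom l (Suc k) = 1 + l * geom l k"
  unfolding geom_def by (simp add: sum.lessThan_Suc_shift sum_distrib_left del: sum.lessThan_Suc)

lemma geom_Suc': "geom l (Suc k) = geom l k + l ^ k"
  unfolding geom_def by simp

lemma (in group) conj_nat_pow: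
  assumes "c \<in> carrier G" "u \<in> carrier G"
  shows "c \<otimes> u [^] (k::nat) \<otimes> inv c = (c \<otimes> u \<otimes> inv c) [^] k"
proof (induction k)
  case 0 then show ?case using assms by simp
next
  case (Suc k)
  have "c \<otimes> u [^] Suc k \<otimes> inv c = (c \<otimes> u [^] k \<otimes> inv c) \<otimes> (c \<otimes> u \<otimes> inv c)"
    using assms by (simp add: m_assoc flip: m_assoc[of "inv c" c])
  then show ?case using Suc by simp
qed

lemma (in group) conj_mult:
  assumes "c \<in> carrier G" "u \<in> carrier G" "v \<in> carrier G"
  shows "c \<otimes> (u \<otimes> v) \<otimes> inv c = (c \<otimes> u \<otimes> inv c) \<otimes> (c \<otimes> v \<otimes> inv c)"
  using assms by (simp add: m_assoc flip: m_assoc[of "inv c" c])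

lemma (in group) conj_fixed_imp_commute:
  assumes "a \<in> carrier G" "z \<in> carrier G" "a \<otimes> z \<otimes> inv a = z"
  shows "a \<otimes> z = z \<otimes> a"
  by (metis assms inv_solve_right' m_closed)

lemma (in group) subgroup_nat_pow_closed:
  assumes "subgroup H G" "u \<in> H"
  shows "u [^] (k::nat) \<in> H"
  by (induction k) (use assms in \<open>auto intro: subgroup.m_closed subgroup.one_closed\<close>)

lemma (in group) conj_iter:
  assumes "g \<in> carrier G" "u \<in> carrier G" "g \<otimes> u \<otimes> inv g = u [^] (l::nat)"
  shows "g [^] (k::nat) \<otimes> u \<otimes> inv (g [^] k) = u [^] (l ^ k)"
proof (induction k)
  case 0 then show ?case using assms by simp
next
  case (Suc k)
  have "g [^] Suc k = g \<otimes> g [^] k" using assms(1) by (rule nat_pow_Suc2)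
  then have "g [^] Suc k \<otimes> u \<otimes> inv (g [^] Suc k) = g \<otimes> (g [^] k \<otimes> u \<otimes> inv (g [^] k)) \<otimes> inv g"
    using assms by (simp add: inv_mult_group m_assoc)
  also have "\<dots> = (u [^] l) [^] (l ^ k)" using Suc assms conj_nat_pow by simp
  finally show ?case using assms by (simp add: nat_pow_pow)
qed

text \<open>If \<open>l^k\<close> acts trivially on \<open>u\<close>, then multiplying the exponent
  \<open>geom l k\<close> by \<open>l\<close> does not change the power of \<open>u\<close>, because
  \<open>l \<cdot> geom l k + 1 = geom l k + l^k\<close>.\<close>
lemma (in group) pow_geom_fixed:
  assumes "u \<in> carrier G" "u [^] (l ^ k) = u"
  shows "u [^] (l * geom l k) = u [^] geom l k"
proof -
  have "u [^] (l * geom l k) \<otimes> u = u [^] geom l (Suc k)"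
    using assms(1) by (simp add: geom_Suc nat_pow_mult[symmetric])
  also have "\<dots> = u [^] geom l k \<otimes> u"
    using assms by (simp add: geom_Suc' nat_pow_mult[symmetric])
  finally show ?thesis using assms(1) by simp
qed

lemma (in group) twisted_power:
  assumes "s \<in> carrier G" "g \<in> carrier G" "g \<otimes> s \<otimes> inv g = s [^] (l::nat)"
  shows "(s \<otimes> g) [^] (k::nat) = s [^] geom l k \<otimes> g [^] k"
proof (induction k)
  case 0 then show ?case by (simp add: geom_def)
next
  case (Suc k)
  have swap: "g \<otimes> s [^] (c::nat) = s [^] (l * c) \<otimes> g" for c
  proof -
    have "g \<otimes> s [^] c \<otimes> inv g = s [^] (l * c)"
      using assms by (simp add: conj_nat_pow nat_pow_pow)
    then show ?thesis using assms(1,2) by (metis inv_solve_right' m_closed nat_pow_closed)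
  qed
  have "(s \<otimes> g) [^] Suc k = s \<otimes> g \<otimes> (s [^] geom l k \<otimes> g [^] k)"
    using Suc assms by (metis nat_pow_Suc2 m_closed)
  also have "\<dots> = s \<otimes> (g \<otimes> s [^] geom l k) \<otimes> g [^] k"
    using assms by (simp add: m_assoc)
  also have "\<dots> = (s \<otimes> s [^] (l * geom l k)) \<otimes> (g \<otimes> g [^] k)"
    using assms by (simp add: swap m_assoc)
  also have "\<dots> = s [^] geom l (Suc k) \<otimes> g [^] Suc k"
    using nat_pow_Suc2[OF assms(1)] nat_pow_Suc2[OF assms(2)] by (simp add: geom_Suc)
  finally show ?case .
qed

lemma (in group) conj_fixes_product_power:
  assumes "a \<in> carrier G" "u \<in> carrier G" "w \<in> carrier G"
    and "a \<otimes> u \<otimes> inv a = u [^] (p::nat)" "a \<otimes> w \<otimes> inv a = w [^] (q::nat)"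
    and "u [^] (p * c) = u [^] (c::nat)" "w [^] (q * c) = w [^] c"
  shows "a \<otimes> (u [^] c \<otimes> w [^] c) \<otimes> inv a = u [^] c \<otimes> w [^] c"
  using assms by (simp add: conj_mult conj_nat_pow nat_pow_pow)

lemma (in group) commutes_with_generate:
  assumes "z \<in> carrier G" "A \<subseteq> carrier G" "\<And>a. a \<in> A \<Longrightarrow> a \<otimes> z = z \<otimes> a"
    and "b \<in> generate G A"
  shows "b \<otimes> z = z \<otimes> b"
  using assms(4)
proof induction
  case one then show ?case using assms(1) by simp
next
  case (incl h) then show ?case using assms(3) by blast
next
  case (inv h)
  then have hG: "h \<in> carrier G" using assms(2) by blast
  have "inv h \<otimes> z = inv h \<otimes> (z \<otimes> h) \<otimes> inv h" using hG assms(1) by (simp add: m_assoc)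
  also have "\<dots> = inv h \<otimes> (h \<otimes> z) \<otimes> inv h" using inv.hyps assms(3) by simp
  also have "\<dots> = z \<otimes> inv h" using hG assms(1) by (simp flip: m_assoc)
  finally show ?case .
next
  case (eng h1 h2)
  moreover have "h1 \<in> carrier G" "h2 \<in> carrier G"
    using eng.hyps generate_incl[OF assms(2)] by blast+
  ultimately show ?case using assms(1) by (metis m_assoc)
qed

lemma (in group) center_of_product:
  assumes "H <#> K = carrier G" "z \<in> carrier G"
    and "\<And>h. h \<in> H \<Longrightarrow> h \<otimes> z = z \<otimes> h" "\<And>k. k \<in> K \<Longrightarrow> k \<otimes> z = z \<otimes> k"
    and "H \<subseteq> carrier G" "K \<subseteq> carrier G"
  shows "z \<in> center G"
  unfolding center_def
proof (intro CollectI conjI ballI)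
  fix g assume "g \<in> carrier G"
  then have "g \<in> H <#> K" using assms(1) by simp
  then obtain h k where "h \<in> H" "k \<in> K" "g = h \<otimes> k"
    unfolding set_mult_def by blast
  then show "z \<otimes> g = g \<otimes> z" using assms by (metis m_assoc subsetD)
qed (rule assms(2))

lemma (in group) ord_in_subgroup:
  assumes "subgroup S G" "a \<in> S"
  shows "group.ord (G\<lparr>carrier := S\<rparr>) a = ord a"
proof -
  interpret S: group "G\<lparr>carrier := S\<rparr>" by (rule subgroup_imp_group[OF assms(1)])
  have "a \<in> carrier G" using assms subgroup.subset by blast
  then show ?thesis
    using assms(2) by (simp add: S.ord_unique pow_eq_id flip: nat_pow_consistent)
qed

lemma isobicyclic_generated:
  assumes "isobicyclic H a b n"
  shows "carrier H \<subseteq> generate H {a, b}"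
proof -
  interpret H: group H using assms unfolding isobicyclic_def by blast
  have ab: "{a, b} \<subseteq> carrier H" using assms unfolding isobicyclic_def by blast
  have sub: "subgroup (generate H {a, b}) H" by (rule H.generate_is_subgroup[OF ab])
  have "generate H {a} \<subseteq> generate H {a, b}" "generate H {b} \<subseteq> generate H {a, b}"
    by (simp_all add: H.mono_generate)
  then have "generate H {a} <#>\<^bsub>H\<^esub> generate H {b} \<subseteq> generate H {a, b}"
    unfolding set_mult_def using subgroup.m_closed[OF sub] by blast
  then show ?thesis using assms unfolding isobicyclic_def by simp
qed

lemma standard_triple_mem:
  assumes "standard_triple H a b t"
  shows "a \<in> carrier H" "b \<in> carrier H"
proof -
  obtain \<phi> where \<phi>: "\<phi> \<in> iso (integer_mod_group t \<times>\<times> integer_mod_group t) H"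
    and a: "\<phi> (1 mod int t, 0) = a" and b: "\<phi> (0, 1 mod int t) = b" and t: "0 < t"
    using assms unfolding standard_triple_def by blast
  have "(1 mod int t, 0) \<in> carrier (integer_mod_group t \<times>\<times> integer_mod_group t)"
    "(0, 1 mod int t) \<in> carrier (integer_mod_group t \<times>\<times> integer_mod_group t)"
    using t by (auto simp: DirProd_def carrier_integer_mod_group)
  then show "a \<in> carrier H" "b \<in> carrier H"
    using \<phi> a b unfolding iso_def hom_def by auto
qed

lemma standard_triple_commute:
  assumes "standard_triple H a b t" "u \<in> carrier H" "v \<in> carrier H"
  shows "u \<otimes>\<^bsub>H\<^esub> v = v \<otimes>\<^bsub>H\<^esub> u"
proof -
  let ?D = "integer_mod_group t \<times>\<times> integer_mod_group t"
  obtain \<phi> where \<phi>: "\<phi> \<in> iso ?D H"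
    using assms unfolding standard_triple_def by blast
  then obtain p q where p: "p \<in> carrier ?D" "u = \<phi> p" and q: "q \<in> carrier ?D" "v = \<phi> q"
    using assms(2,3) unfolding iso_def bij_betw_def by blast
  have hom: "\<phi> \<in> hom ?D H" using \<phi> by (simp add: iso_def)
  have "p \<otimes>\<^bsub>?D\<^esub> q = q \<otimes>\<^bsub>?D\<^esub> p"
    by (cases p; cases q) (simp add: DirProd_def add.commute)
  then show ?thesis
    using hom_mult[OF hom p(1) q(1)] hom_mult[OF hom q(1) p(1)] p(2) q(2) by simp
qed

text \<open>A group \<open>G = T S\<close> with \<open>T \<inter> S = 1\<close>, \<open>T\<close> abelian and \<open>S\<close> generated by
  \<open>x_S, y_S\<close>, which act on \<open>x_T, y_T \<in> T\<close> diagonally with eigenvalue \<open>\<lambda>\<close>.\<close>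
locale diagonal_action = group G for G (structure) +
  fixes T S :: "'a set" and xT yT xS yS :: 'a and lam :: nat
  assumes T_sub: "subgroup T G" and S_sub: "subgroup S G"
    and T_comm: "\<And>u v. u \<in> T \<Longrightarrow> v \<in> T \<Longrightarrow> u \<otimes> v = v \<otimes> u"
    and xT_in: "xT \<in> T" and yT_in: "yT \<in> T" and xS_in: "xS \<in> S" and yS_in: "yS \<in> S"
    and S_gen: "S \<subseteq> generate G {xS, yS}"
    and TS_meet: "T \<inter> S = {\<one>}" and TS_prod: "T <#> S = carrier G"
    and act_xS_xT: "xS \<otimes> xT \<otimes> inv xS = xT"
    and act_xS_yT: "xS \<otimes> yT \<otimes> inv xS = yT [^] lam"
    and act_yS_xT: "yS \<otimes> xT \<otimes> inv yS = xT [^] lam"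
    and act_yS_yT: "yS \<otimes> yT \<otimes> inv yS = yT"
begin

abbreviation t_part :: 'a where "t_part \<equiv> xT \<otimes> yT [^] lam"
abbreviation s_part :: 'a where "s_part \<equiv> xS \<otimes> yS"

lemma T_carrier: "T \<subseteq> carrier G" and S_carrier: "S \<subseteq> carrier G"
  using T_sub S_sub subgroup.subset by blast+

lemma gens_carrier [simp]:
  "xT \<in> carrier G" "yT \<in> carrier G" "xS \<in> carrier G" "yS \<in> carrier G"
  using xT_in yT_in xS_in yS_in T_carrier S_carrier by blast+

lemma t_part_in: "t_part \<in> T"
  using xT_in yT_in T_sub by (simp add: subgroup.m_closed subgroup_nat_pow_closed)

lemma s_part_in: "s_part \<in> S"
  using xS_in yS_in S_sub by (simp add: subgroup.m_closed)

lemma product_split: "(xS \<otimes> xT) \<otimes> (yS \<otimes> yT) = t_part \<otimes> s_part"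
proof -
  have "t_part \<otimes> s_part
      = (xS \<otimes> xT \<otimes> inv xS) \<otimes> (xS \<otimes> (yS \<otimes> yT \<otimes> inv yS) \<otimes> inv xS) \<otimes> (xS \<otimes> yS)"
    by (simp only: act_xS_xT act_yS_yT act_xS_yT)
  also have "\<dots> = (xS \<otimes> xT) \<otimes> (yS \<otimes> yT)"
    by (simp add: m_assoc flip: m_assoc[of "inv xS" xS] m_assoc[of "inv yS" yS])
  finally show ?thesis ..
qed

lemma s_part_conj:
  assumes "u \<in> carrier G"
  shows "s_part \<otimes> u \<otimes> inv s_part = xS \<otimes> (yS \<otimes> u \<otimes> inv yS) \<otimes> inv xS"
  using assms by (simp add: m_assoc inv_mult_group)

lemma s_part_xT: "s_part \<otimes> xT \<otimes> inv s_part = xT [^] lam"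
  by (simp add: s_part_conj act_yS_xT conj_nat_pow act_xS_xT)

lemma s_part_yT: "s_part \<otimes> yT \<otimes> inv s_part = yT [^] lam"
  by (simp add: s_part_conj act_yS_yT act_xS_yT)

lemma s_part_t_part: "s_part \<otimes> t_part \<otimes> inv s_part = t_part [^] lam"
proof -
  have "s_part \<otimes> t_part \<otimes> inv s_part = xT [^] lam \<otimes> (yT [^] lam) [^] lam"
    by (simp add: conj_mult conj_nat_pow s_part_xT s_part_yT)
  also have "\<dots> = t_part [^] lam"
    using T_comm xT_in yT_in T_sub by (simp add: pow_mult_distrib subgroup_nat_pow_closed)
  finally show ?thesis .
qed

lemma power_formula: "(t_part \<otimes> s_part) [^] (k::nat) = t_part [^] geom lam k \<otimes> s_part [^] k"
  by (rule twisted_power[OF _ _ s_part_t_part]) simp_all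

lemma commutes_with_S:
  assumes "z \<in> carrier G" "xS \<otimes> z = z \<otimes> xS" "yS \<otimes> z = z \<otimes> yS" "a \<in> S"
  shows "a \<otimes> z = z \<otimes> a"
  using commutes_with_generate[of z "{xS, yS}" a] assms S_gen by auto

text \<open>Writing it as \<open>x_T^c w^c\<close> with \<open>w = y_T^\<lambda>\<close>, the generator \<open>x_S\<close> acts on the
  two factors by the exponents \<open>1, \<lambda>\<close> and \<open>y_S\<close> by \<open>\<lambda>, 1\<close>; both fix it since
  \<open>\<lambda>^k\<close> acts trivially on \<open>T\<close>.\<close>
lemma central_when_s_part_trivial:
  assumes "s_part [^] k = \<one>"
  shows "t_part [^] geom lam k \<in> T \<inter> center G"
proof -
  define c where "c = geom lam k"
  define w where "w = yT [^] lam"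
  have wT: "w \<in> T" unfolding w_def using T_sub yT_in by (rule subgroup_nat_pow_closed)
  then have wG: "w \<in> carrier G" using T_carrier by blast
  have xT_fix: "xT [^] (lam ^ k) = xT" and yT_fix: "yT [^] (lam ^ k) = yT"
    using conj_iter[OF _ _ s_part_xT, of k] conj_iter[OF _ _ s_part_yT, of k] assms by simp_all
  have w_fix: "w [^] (lam ^ k) = w"
    unfolding w_def by (metis yT_fix gens_carrier(2) mult.commute nat_pow_pow)
  have xT_c: "xT [^] (lam * c) = xT [^] c" and w_c: "w [^] (lam * c) = w [^] c"
    unfolding c_def using pow_geom_fixed xT_fix w_fix wG by simp_all
  have xS_w: "xS \<otimes> w \<otimes> inv xS = w [^] lam" and yS_w: "yS \<otimes> w \<otimes> inv yS = w"
    unfolding w_def by (simp_all add: conj_nat_pow act_xS_yT act_yS_yT)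
  define z where "z = t_part [^] c"
  have z_split: "z = xT [^] c \<otimes> w [^] c"
    unfolding z_def w_def[symmetric] by (rule pow_mult_distrib[OF T_comm[OF xT_in wT] gens_carrier(1) wG])
  have zT: "z \<in> T" unfolding z_def using T_sub t_part_in by (rule subgroup_nat_pow_closed)
  then have zG: "z \<in> carrier G" using T_carrier by blast
  have "xS \<otimes> z \<otimes> inv xS = z"
    unfolding z_split using conj_fixes_product_power[of xS xT w 1 lam c] act_xS_xT xS_w w_c wG by simp
  then have xS_z: "xS \<otimes> z = z \<otimes> xS" by (rule conj_fixed_imp_commute[OF gens_carrier(3) zG])
  have "yS \<otimes> z \<otimes> inv yS = z"
    unfolding z_split using conj_fixes_product_power[of yS xT w lam 1 c] act_yS_xT yS_w xT_c wG by simp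
  then have yS_z: "yS \<otimes> z = z \<otimes> yS" by (rule conj_fixed_imp_commute[OF gens_carrier(4) zG])
  have "z \<in> center G"
  proof (rule center_of_product[OF TS_prod zG _ _ T_carrier S_carrier])
    show "h \<otimes> z = z \<otimes> h" if "h \<in> T" for h using T_comm[OF that zT] .
    show "a \<otimes> z = z \<otimes> a" if "a \<in> S" for a using commutes_with_S[OF zG xS_z yS_z that] .
  qed
  then show ?thesis using zT unfolding z_def c_def by blast
qed

text \<open>For a canonical decomposition, \<open>x y = \<sigma> g\<close> and \<open>g\<close> have the same powers
  equal to \<open>1\<close>, hence the same order.\<close>
theorem ord_product:
  assumes canonical: "T \<inter> center G = {\<one>}"
  shows "ord ((xS \<otimes> xT) \<otimes> (yS \<otimes> yT)) = ord s_part"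
proof -
  have s_G: "s_part \<in> carrier G" and t_G: "t_part \<in> carrier G" by simp_all
  have same_kernel: "(t_part \<otimes> s_part) [^] k = \<one> \<longleftrightarrow> s_part [^] k = \<one>" for k :: nat
  proof
    assume "s_part [^] k = \<one>"
    then show "(t_part \<otimes> s_part) [^] k = \<one>"
      using central_when_s_part_trivial canonical by (simp add: power_formula)
  next
    assume "(t_part \<otimes> s_part) [^] k = \<one>"
    then have "t_part [^] geom lam k \<otimes> s_part [^] k = \<one>" by (simp add: power_formula)
    then have "s_part [^] k = inv (t_part [^] geom lam k)"
      using s_G t_G by (metis inv_equality nat_pow_closed inv_inv)
    then have "s_part [^] k \<in> T"
      using T_sub t_part_in by (simp add: subgroup.m_inv_closed subgroup_nat_pow_closed)
    moreover have "s_part [^] k \<in> S" using S_sub s_part_in by (rule subgroup_nat_pow_closed)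
    ultimately show "s_part [^] k = \<one>" using TS_meet by blast
  qed
  show ?thesis
    unfolding product_split using same_kernel s_G t_G by (simp add: ord_unique pow_eq_id)
qed

end

text \<open>The theorem: the hypotheses of the statement provide a diagonal action,
  and the order of \<open>x_S y_S\<close> in \<open>S\<close> equals its order in \<open>G\<close>.\<close>
theorem lemma9p1:
  fixes G :: "('a, 'b) monoid_scheme"
    and T S :: "'a set"
    and x y xT yT xS yS :: 'a
    and n s t lam :: nat
  assumes iso_G: "isobicyclic G x y n"
    and T_normal: "T \<lhd> G"
    and S_sub: "subgroup S G"
    and TS_meet: "T \<inter> S = {\<one>\<^bsub>G\<^esub>}"
    and TS_prod: "T <#>\<^bsub>G\<^esub> S = carrier G"
    and T_std: "standard_triple (G\<lparr>carrier := T\<rparr>) xT yT t"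
    and S_iso: "isobicyclic (G\<lparr>carrier := S\<rparr>) xS yS s"
    and st_coprime: "coprime s t"
    and lam_unit: "coprime lam t"
    and act_xS_xT: "xS \<otimes>\<^bsub>G\<^esub> xT \<otimes>\<^bsub>G\<^esub> inv\<^bsub>G\<^esub> xS = xT"
    and act_xS_yT: "xS \<otimes>\<^bsub>G\<^esub> yT \<otimes>\<^bsub>G\<^esub> inv\<^bsub>G\<^esub> xS = yT [^]\<^bsub>G\<^esub> lam"
    and act_yS_xT: "yS \<otimes>\<^bsub>G\<^esub> xT \<otimes>\<^bsub>G\<^esub> inv\<^bsub>G\<^esub> yS = xT [^]\<^bsub>G\<^esub> lam"
    and act_yS_yT: "yS \<otimes>\<^bsub>G\<^esub> yT \<otimes>\<^bsub>G\<^esub> inv\<^bsub>G\<^esub> yS = yT"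
    and x_decomp: "x = xS \<otimes>\<^bsub>G\<^esub> xT"
    and y_decomp: "y = yS \<otimes>\<^bsub>G\<^esub> yT"
    and canonical: "T \<inter> center G = {\<one>\<^bsub>G\<^esub>}"
  shows "group.ord G (x \<otimes>\<^bsub>G\<^esub> y) = group.ord (G\<lparr>carrier := S\<rparr>) (xS \<otimes>\<^bsub>G\<^esub> yS)"
proof -
  interpret group G using iso_G unfolding isobicyclic_def by blast
  have T_sub: "subgroup T G" using T_normal by (simp add: normal_def)
  have xS_yS: "xS \<in> S" "yS \<in> S" using S_iso unfolding isobicyclic_def by simp_all
  have S_gen: "S \<subseteq> generate G {xS, yS}"
    using isobicyclic_generated[OF S_iso] generate_consistent[of "{xS, yS}" S] xS_yS S_sub by simp
  have xT_yT: "xT \<in> T" "yT \<in> T" using standard_triple_mem[OF T_std] by simp_all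
  have T_comm: "\<And>u v. u \<in> T \<Longrightarrow> v \<in> T \<Longrightarrow> u \<otimes>\<^bsub>G\<^esub> v = v \<otimes>\<^bsub>G\<^esub> u"
    using standard_triple_commute[OF T_std] by simp
  interpret diagonal_action G T S xT yT xS yS lam
    by (rule diagonal_action.intro[OF is_group diagonal_action_axioms.intro]; fact)
  show ?thesis
    using ord_product[OF canonical] ord_in_subgroup[OF S_sub s_part_in] x_decomp y_decomp by simp
qed

end
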